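(* Let $\mathcal B$ be a finite set of finite Cornish algebras of type $F=F^+\,\dot\cup\,F^-$ and let $\mathcal Y=\{D(\mathbf A)\mid\mathbf A\in\mathcal B\}$. Then the algebras in $\mathcal B$ are semi-primal and share a common ternary discriminator term provided: (i) each $\mathbb X\in\mathcal Y$ has no non-empty proper substructures; (ii) the set $F^-$ is non-empty; (iii) there exists a unary term $t$ in the signature $F$ such that $t^{\mathbb X}$ is constant for all $\mathbb X\in\mathcal Y$.
   Context: A Cornish algebra of type $F$: a bounded distributive lattice with unary operations $f^{\mathbf A}$ ($f\in F$), an endomorphism for $f\in F^+$ and a dual endomorphism for $f\in F^-$. A Cornish space of type $F$: a Priestley space with unary operations $f^{\mathbb X}$, continuous order-preserving for $f\in F^+$ and continuous order-reversing for $f\in F^-$. A substructure is a closed subset closed under all $f^{\mathbb X}$. $D(\mathbf A)$: the set of bounded-lattice homomorphisms from the lattice reduct of $\mathbf A$ to $\mathbf 2$, ordered pointwise, topology from $\{0,1\}^A$, with $f^{D(\mathbf A)}(x)=x\circ f^{\mathbf A}$ for $f\in F^+$ and $c\circ x\circ f^{\mathbf A}$ for $f\in F^-$ ($c$ Boolean complement). A unary term is a finite composite of symbols of $F$, interpreted in $\mathbb X$ as the corresponding composite of the maps $f^{\mathbb X}$. Semi-primal: finite algebra with a majority term such that every subalgebra of $\mathbf A^2$ is a product of subalgebras or the graph of the identity on a subalgebra. Sharing a common ternary discriminator term: one ternary term $t$ induces on each algebra the map $\tau(x,y,z)=x$ if $x\ne y$, $=z$ if $x=y$. *)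

theory Defs
  imports "HOL-Analysis.Analysis"
begin

text \<open>A Cornish algebra of type F. The type F is the type 'f of operation symbols,
  split as F = F+ (symbols f with pos f) disjoint-union F- (symbols f with not pos f).\<close>

record ('a, 'f) cornish =
  car :: "'a set"
  jn  :: "'a \<Rightarrow> 'a \<Rightarrow> 'a"
  mt  :: "'a \<Rightarrow> 'a \<Rightarrow> 'a"
  bt  :: "'a"
  tp  :: "'a"
  ops :: "'f \<Rightarrow> 'a \<Rightarrow> 'a"

definition bdl :: "('a, 'f) cornish \<Rightarrow> bool" where
  "bdl A \<longleftrightarrow>
     bt A \<in> car A \<and> tp A \<in> car A \<and>
     (\<forall>a\<in>car A. \<forall>b\<in>car A. jn A a b \<in> car A \<and> mt A a b \<in> car A) \<and>
     (\<forall>a\<in>car A. \<forall>b\<in>car A. \<forall>c\<in>car A.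
        jn A (jn A a b) c = jn A a (jn A b c) \<and> mt A (mt A a b) c = mt A a (mt A b c) \<and>
        mt A a (jn A b c) = jn A (mt A a b) (mt A a c)) \<and>
     (\<forall>a\<in>car A. \<forall>b\<in>car A.
        jn A a b = jn A b a \<and> mt A a b = mt A b a \<and>
        jn A a (mt A a b) = a \<and> mt A a (jn A a b) = a) \<and>
     (\<forall>a\<in>car A. jn A (bt A) a = a \<and> mt A (tp A) a = a)"

definition cornish_algebra :: "('f \<Rightarrow> bool) \<Rightarrow> ('a, 'f) cornish \<Rightarrow> bool" where
  "cornish_algebra pos A \<longleftrightarrow> bdl A \<and>
     (\<forall>f. \<forall>a\<in>car A. ops A f a \<in> car A) \<and>
     (\<forall>f. pos f \<longrightarrow>
        (\<forall>a\<in>car A. \<forall>b\<in>car A. ops A f (jn A a b) = jn A (ops A f a) (ops A f b) \<and>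
                               ops A f (mt A a b) = mt A (ops A f a) (ops A f b)) \<and>
        ops A f (bt A) = bt A \<and> ops A f (tp A) = tp A) \<and>
     (\<forall>f. \<not> pos f \<longrightarrow>
        (\<forall>a\<in>car A. \<forall>b\<in>car A. ops A f (jn A a b) = mt A (ops A f a) (ops A f b) \<and>
                               ops A f (mt A a b) = jn A (ops A f a) (ops A f b)) \<and>
        ops A f (bt A) = tp A \<and> ops A f (tp A) = bt A)"

text \<open>Points of D(A): bounded-lattice homomorphisms from the lattice reduct to 2 = bool
  (False = 0, True = 1), represented as extensional functions on the carrier.\<close>

definition dual_carrier :: "('a, 'f) cornish \<Rightarrow> ('a \<Rightarrow> bool) set" where
  "dual_carrier A = {x \<in> car A \<rightarrow>\<^sub>E (UNIV :: bool set).
      (\<forall>a\<in>car A. \<forall>b\<in>car A. x (jn A a b) = (x a \<or> x b) \<and> x (mt A a b) = (x a \<and> x b)) \<and>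
      x (bt A) = False \<and> x (tp A) = True}"

definition dual_topology :: "('a, 'f) cornish \<Rightarrow> ('a \<Rightarrow> bool) topology" where
  "dual_topology A = subtopology (product_topology (\<lambda>_. discrete_topology (UNIV :: bool set)) (car A))
                                 (dual_carrier A)"

definition dual_op :: "('f \<Rightarrow> bool) \<Rightarrow> ('a, 'f) cornish \<Rightarrow> 'f \<Rightarrow> ('a \<Rightarrow> bool) \<Rightarrow> ('a \<Rightarrow> bool)" where
  "dual_op pos A f x =
     (if pos f then restrict (\<lambda>a. x (ops A f a)) (car A)
      else restrict (\<lambda>a. \<not> x (ops A f a)) (car A))"

definition dual_substructure :: "('f \<Rightarrow> bool) \<Rightarrow> ('a, 'f) cornish \<Rightarrow> ('a \<Rightarrow> bool) set \<Rightarrow> bool" where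
  "dual_substructure pos A S \<longleftrightarrow> S \<subseteq> dual_carrier A \<and> closedin (dual_topology A) S \<and>
     (\<forall>f. \<forall>x\<in>S. dual_op pos A f x \<in> S)"

text \<open>Unary term = finite (nonempty) composite of symbols; [f1,...,fn] is interpreted as
  f1 o ... o fn.\<close>
definition dual_uterm :: "('f \<Rightarrow> bool) \<Rightarrow> ('a, 'f) cornish \<Rightarrow> 'f list \<Rightarrow> ('a \<Rightarrow> bool) \<Rightarrow> ('a \<Rightarrow> bool)" where
  "dual_uterm pos A t = foldr (\<lambda>f g. dual_op pos A f \<circ> g) t id"

datatype ('f, 'v) trm = Var 'v | Join "('f, 'v) trm" "('f, 'v) trm" | Meet "('f, 'v) trm" "('f, 'v) trm"
  | Bot | Top | Op 'f "('f, 'v) trm"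

primrec teval :: "('a, 'f) cornish \<Rightarrow> ('v \<Rightarrow> 'a) \<Rightarrow> ('f, 'v) trm \<Rightarrow> 'a" where
  "teval A \<rho> (Var v) = \<rho> v"
| "teval A \<rho> (Join s t) = jn A (teval A \<rho> s) (teval A \<rho> t)"
| "teval A \<rho> (Meet s t) = mt A (teval A \<rho> s) (teval A \<rho> t)"
| "teval A \<rho> Bot = bt A"
| "teval A \<rho> Top = tp A"
| "teval A \<rho> (Op f s) = ops A f (teval A \<rho> s)"

datatype var3 = V0 | V1 | V2

definition env3 :: "'a \<Rightarrow> 'a \<Rightarrow> 'a \<Rightarrow> var3 \<Rightarrow> 'a" where
  "env3 x y z v = (case v of V0 \<Rightarrow> x | V1 \<Rightarrow> y | V2 \<Rightarrow> z)"

definition is_majority_term :: "('a, 'f) cornish \<Rightarrow> ('f, var3) trm \<Rightarrow> bool" where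
  "is_majority_term A m \<longleftrightarrow> (\<forall>x\<in>car A. \<forall>y\<in>car A.
      teval A (env3 x x y) m = x \<and> teval A (env3 x y x) m = x \<and> teval A (env3 y x x) m = x)"

definition is_discriminator_term :: "('a, 'f) cornish \<Rightarrow> ('f, var3) trm \<Rightarrow> bool" where
  "is_discriminator_term A t \<longleftrightarrow> (\<forall>x\<in>car A. \<forall>y\<in>car A. \<forall>z\<in>car A.
      teval A (env3 x y z) t = (if x \<noteq> y then x else z))"

definition subalg :: "('a, 'f) cornish \<Rightarrow> 'a set \<Rightarrow> bool" where
  "subalg A S \<longleftrightarrow> S \<subseteq> car A \<and> bt A \<in> S \<and> tp A \<in> S \<and>
     (\<forall>a\<in>S. \<forall>b\<in>S. jn A a b \<in> S \<and> mt A a b \<in> S) \<and> (\<forall>f. \<forall>a\<in>S. ops A f a \<in> S)"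

definition subalg2 :: "('a, 'f) cornish \<Rightarrow> ('a \<times> 'a) set \<Rightarrow> bool" where
  "subalg2 A S \<longleftrightarrow> S \<subseteq> car A \<times> car A \<and> (bt A, bt A) \<in> S \<and> (tp A, tp A) \<in> S \<and>
     (\<forall>(a,a')\<in>S. \<forall>(b,b')\<in>S. (jn A a b, jn A a' b') \<in> S \<and> (mt A a b, mt A a' b') \<in> S) \<and>
     (\<forall>f. \<forall>(a,a')\<in>S. (ops A f a, ops A f a') \<in> S)"

definition semi_primal :: "('a, 'f) cornish \<Rightarrow> bool" where
  "semi_primal A \<longleftrightarrow> finite (car A) \<and> (\<exists>m. is_majority_term A m) \<and>
     (\<forall>S. subalg2 A S \<longrightarrow>
        (\<exists>B1 B2. subalg A B1 \<and> subalg A B2 \<and> S = B1 \<times> B2) \<or>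
        (\<exists>B. subalg A B \<and> S = {(b, b) | b. b \<in> B}))"

end

theory Submission
  imports Defs
begin

text \<open>Let t be the unary term whose dual is constant on D(A), with value c. For a word v, the
  composite v t, followed by a negative symbol if it has an odd number of them, is a unary term
  k of A with p (k a) = (v c) a for every dual point p. All dual points therefore agree on k a,
  so k takes only the values 0 and 1. As D(A) has no proper non-empty substructure, the orbit of
  c is all of D(A); by Priestley separation, finitely many such k separate the points of every
  A in the family at once. Comparing their 0-1 values gives an equality test and hence a common
  discriminator term; the same terms and the discriminator force every subalgebra of A squared
  to be a product or a diagonal, and the median is a majority term.\<close>

section \<open>Dual points of a finite bounded distributive lattice\<close>

context
  fixes A :: "('a, 'f) cornish"
  assumes bdl: "bdl A"
begin

lemma bdl_closed:
  "bt A \<in> car A" "tp A \<in> car A"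
  "a \<in> car A \<Longrightarrow> b \<in> car A \<Longrightarrow> jn A a b \<in> car A"
  "a \<in> car A \<Longrightarrow> b \<in> car A \<Longrightarrow> mt A a b \<in> car A"
  using bdl unfolding bdl_def by blast+

lemma bdl_laws:
  assumes "a \<in> car A" "b \<in> car A" "c \<in> car A"
  shows "jn A (jn A a b) c = jn A a (jn A b c)" "mt A (mt A a b) c = mt A a (mt A b c)"
    "mt A a (jn A b c) = jn A (mt A a b) (mt A a c)"
    "jn A a b = jn A b a" "mt A a b = mt A b a"
    "jn A a (mt A a b) = a" "mt A a (jn A a b) = a"
    "jn A (bt A) a = a" "mt A (tp A) a = a"
  using bdl assms unfolding bdl_def by blast+

lemma bdl_idem_bounds:
  assumes a: "a \<in> car A"
  shows "mt A a a = a" "jn A a a = a" "mt A (bt A) a = bt A" "jn A (tp A) a = tp A"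
    "mt A a (bt A) = bt A" "jn A a (tp A) = tp A" "jn A a (bt A) = a" "mt A a (tp A) = a"
proof -
  show "mt A a a = a" by (metis a bdl_closed(4) bdl_laws(6,7))
  show "jn A a a = a" by (metis a bdl_closed(3) bdl_laws(6,7))
  show bt_meet: "mt A (bt A) a = bt A" by (metis a bdl_closed(1) bdl_laws(7,8))
  show tp_join: "jn A (tp A) a = tp A" by (metis a bdl_closed(2) bdl_laws(6,9))
  show "mt A a (bt A) = bt A" by (metis bt_meet a bdl_closed(1) bdl_laws(5))
  show "jn A a (tp A) = tp A" by (metis tp_join a bdl_closed(2) bdl_laws(4))
  show "jn A a (bt A) = a" by (metis a bdl_closed(1) bdl_laws(4,8))
  show "mt A a (tp A) = a" by (metis a bdl_closed(2) bdl_laws(5,9))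
qed

definition bdl_le :: "'a \<Rightarrow> 'a \<Rightarrow> bool" where
  "bdl_le x y \<longleftrightarrow> mt A x y = x"

lemma bdl_le_refl: "x \<in> car A \<Longrightarrow> bdl_le x x"
  unfolding bdl_le_def by (simp add: bdl_idem_bounds(1))

lemma bdl_le_trans:
  "x \<in> car A \<Longrightarrow> y \<in> car A \<Longrightarrow> z \<in> car A \<Longrightarrow> bdl_le x y \<Longrightarrow> bdl_le y z \<Longrightarrow> bdl_le x z"
  unfolding bdl_le_def by (metis bdl_laws(2))

lemma bdl_le_antisym: "x \<in> car A \<Longrightarrow> y \<in> car A \<Longrightarrow> bdl_le x y \<Longrightarrow> bdl_le y x \<Longrightarrow> x = y"
  unfolding bdl_le_def by (metis bdl_laws(5))

lemma bdl_le_meet_iff: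
  "x \<in> car A \<Longrightarrow> y \<in> car A \<Longrightarrow> z \<in> car A \<Longrightarrow> bdl_le x (mt A y z) \<longleftrightarrow> bdl_le x y \<and> bdl_le x z"
  unfolding bdl_le_def by (metis bdl_closed(4) bdl_idem_bounds(1) bdl_laws(2,5))

lemma bdl_meet_le: "x \<in> car A \<Longrightarrow> y \<in> car A \<Longrightarrow> bdl_le (mt A x y) x"
  unfolding bdl_le_def by (metis bdl_idem_bounds(1) bdl_laws(2,5))

lemma bdl_le_joinI:
  "x \<in> car A \<Longrightarrow> y \<in> car A \<Longrightarrow> z \<in> car A \<Longrightarrow> bdl_le x y \<Longrightarrow> bdl_le x (jn A y z)"
  unfolding bdl_le_def by (metis bdl_closed(4) bdl_laws(3,6))

lemma bdl_join_le:
  "x \<in> car A \<Longrightarrow> y \<in> car A \<Longrightarrow> z \<in> car A \<Longrightarrow> bdl_le x z \<Longrightarrow> bdl_le y z \<Longrightarrow> bdl_le (jn A x y) z"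
  unfolding bdl_le_def by (metis bdl_closed(3) bdl_laws(3,5))

lemma bdl_finite_has_minimal:
  assumes "finite (car A)" "M \<subseteq> car A" "M \<noteq> {}"
  obtains j where "j \<in> M" "\<And>e. e \<in> M \<Longrightarrow> bdl_le e j \<Longrightarrow> e = j"
proof -
  define down where "down e = card {x \<in> car A. bdl_le x e}" for e
  obtain j where j: "j \<in> M" and least: "\<And>e. e \<in> M \<Longrightarrow> down j \<le> down e"
    using ex_has_least_nat[of "\<lambda>e. e \<in> M" _ down] assms(3) by blast
  have "e = j" if e: "e \<in> M" "bdl_le e j" for e
  proof (rule ccontr)
    assume "e \<noteq> j"
    have ej: "e \<in> car A" "j \<in> car A" using e j assms(2) by auto
    have "{x \<in> car A. bdl_le x e} \<subset> {x \<in> car A. bdl_le x j}"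
      using bdl_le_trans[of _ e j] bdl_le_antisym[of e j] bdl_le_refl[of j] ej e \<open>e \<noteq> j\<close> by auto
    hence "down e < down j" unfolding down_def by (rule psubset_card_mono[rotated]) (use assms(1) in auto)
    with least[OF e(1)] show False by simp
  qed
  with j that show ?thesis by blast
qed

lemma join_prime_dual_point:
  assumes j: "j \<in> car A" "\<not> bdl_le j (bt A)"
    and prime: "\<And>u w. u \<in> car A \<Longrightarrow> w \<in> car A \<Longrightarrow> bdl_le j (jn A u w) \<Longrightarrow> bdl_le j u \<or> bdl_le j w"
  shows "restrict (bdl_le j) (car A) \<in> dual_carrier A"
  unfolding dual_carrier_def
proof (intro CollectI conjI ballI)
  fix x y assume x: "x \<in> car A" and y: "y \<in> car A"
  show "restrict (bdl_le j) (car A) (jn A x y) =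
      (restrict (bdl_le j) (car A) x \<or> restrict (bdl_le j) (car A) y)"
    using prime[OF x y] bdl_le_joinI[of j x y] bdl_le_joinI[of j y x] bdl_laws(4)[OF x y]
      x y j(1) bdl_closed(3)[OF x y] by auto
  show "restrict (bdl_le j) (car A) (mt A x y) =
      (restrict (bdl_le j) (car A) x \<and> restrict (bdl_le j) (car A) y)"
    using bdl_le_meet_iff[of j x y] x y j(1) bdl_closed(4)[OF x y] by auto
next
  show "restrict (bdl_le j) (car A) (bt A) = False" using j bdl_closed(1) by simp
  show "restrict (bdl_le j) (car A) (tp A) = True"
    using j(1) bdl_closed(2) bdl_idem_bounds(8) unfolding bdl_le_def by simp
qed auto

lemma dual_point_separates_le:
  assumes fin: "finite (car A)" and a: "a \<in> car A" and b: "b \<in> car A" and nle: "\<not> bdl_le a b"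
  shows "\<exists>p\<in>dual_carrier A. p a \<and> \<not> p b"
proof -
  define M where "M = {e \<in> car A. bdl_le e a \<and> \<not> bdl_le e b}"
  have "a \<in> M" using a nle bdl_le_refl unfolding M_def by auto
  then obtain j where "j \<in> M" and minimal: "\<And>e. e \<in> M \<Longrightarrow> bdl_le e j \<Longrightarrow> e = j"
    using bdl_finite_has_minimal[OF fin, of M] unfolding M_def by blast
  hence j: "j \<in> car A" "bdl_le j a" "\<not> bdl_le j b" unfolding M_def by auto
  have below_j: "bdl_le e b" if "e \<in> car A" "bdl_le e j" "e \<noteq> j" for e
    using minimal[of e] bdl_le_trans[of e j a] that j a unfolding M_def by blast
  have prime: "bdl_le j u \<or> bdl_le j w"
    if u: "u \<in> car A" and w: "w \<in> car A" and le_join: "bdl_le j (jn A u w)" for u w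
  proof (rule ccontr)
    assume "\<not> (bdl_le j u \<or> bdl_le j w)"
    hence "mt A j u \<noteq> j" "mt A j w \<noteq> j" unfolding bdl_le_def by auto
    hence "bdl_le (mt A j u) b" "bdl_le (mt A j w) b"
      using below_j bdl_meet_le bdl_closed(4) u w j(1) by auto
    hence "bdl_le (jn A (mt A j u) (mt A j w)) b" using bdl_join_le bdl_closed(4) u w j(1) b by auto
    moreover have "jn A (mt A j u) (mt A j w) = j"
      using le_join bdl_laws(3) u w j(1) unfolding bdl_le_def by metis
    ultimately show False using j by simp
  qed
  have "\<not> bdl_le j (bt A)"
    using j bdl_le_trans[of j "bt A" b] bdl_closed(1) b bdl_idem_bounds(3) unfolding bdl_le_def by auto
  with join_prime_dual_point[OF j(1) _ prime] j a b show ?thesis by (intro bexI) auto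
qed

lemma dual_points_separate:
  assumes "finite (car A)" "a \<in> car A" "b \<in> car A" "a \<noteq> b"
  shows "\<exists>p\<in>dual_carrier A. p a \<noteq> p b"
  using dual_point_separates_le[OF assms(1-3)] dual_point_separates_le[OF assms(1,3,2)]
    bdl_le_antisym[OF assms(2,3)] assms(4) by metis

lemma eq_if_dual_points_agree:
  assumes "finite (car A)" "a \<in> car A" "b \<in> car A" "\<And>p. p \<in> dual_carrier A \<Longrightarrow> p a = p b"
  shows "a = b"
  using dual_points_separate[OF assms(1-3)] assms(4) by blast

end


section \<open>The dual space of a Cornish algebra\<close>

lemma cornish_algebra_bdl: "cornish_algebra pos A \<Longrightarrow> bdl A"
  unfolding cornish_algebra_def by blast

lemma cornish_algebra_ops_closed: "cornish_algebra pos A \<Longrightarrow> a \<in> car A \<Longrightarrow> ops A f a \<in> car A"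
  unfolding cornish_algebra_def by blast

lemma cornish_algebra_negative_swaps_bounds:
  assumes "cornish_algebra pos A" "\<not> pos g"
  shows "ops A g (bt A) = tp A" "ops A g (tp A) = bt A"
  using assms unfolding cornish_algebra_def by blast+

lemma dual_carrierD:
  assumes "x \<in> dual_carrier A"
  shows "a \<in> car A \<Longrightarrow> b \<in> car A \<Longrightarrow> x (jn A a b) = (x a \<or> x b)"
    "a \<in> car A \<Longrightarrow> b \<in> car A \<Longrightarrow> x (mt A a b) = (x a \<and> x b)"
    "x (bt A) = False" "x (tp A) = True"
  using assms unfolding dual_carrier_def by auto

lemma dual_op_apply: "a \<in> car A \<Longrightarrow> dual_op pos A f x a = (x (ops A f a) = pos f)"
  unfolding dual_op_def by auto

lemma dual_op_carrier:
  assumes ca: "cornish_algebra pos A" and x: "x \<in> dual_carrier A"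
  shows "dual_op pos A f x \<in> dual_carrier A"
proof -
  note closed = bdl_closed[OF cornish_algebra_bdl[OF ca]] cornish_algebra_ops_closed[OF ca]
  consider "pos f" "ops A f (bt A) = bt A" "ops A f (tp A) = tp A"
      "\<forall>a\<in>car A. \<forall>b\<in>car A. ops A f (jn A a b) = jn A (ops A f a) (ops A f b) \<and>
                           ops A f (mt A a b) = mt A (ops A f a) (ops A f b)"
    | "\<not> pos f" "ops A f (bt A) = tp A" "ops A f (tp A) = bt A"
      "\<forall>a\<in>car A. \<forall>b\<in>car A. ops A f (jn A a b) = mt A (ops A f a) (ops A f b) \<and>
                           ops A f (mt A a b) = jn A (ops A f a) (ops A f b)"
    using ca unfolding cornish_algebra_def by blast
  then show ?thesis
    by cases (auto simp: dual_carrier_def dual_op_def closed dual_carrierD[OF x])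
qed

lemma dual_uterm_Nil [simp]: "dual_uterm pos A [] = id"
  unfolding dual_uterm_def by simp

lemma dual_uterm_Cons [simp]: "dual_uterm pos A (f # w) = dual_op pos A f \<circ> dual_uterm pos A w"
  unfolding dual_uterm_def by simp

lemma dual_uterm_append: "dual_uterm pos A (v @ w) = dual_uterm pos A v \<circ> dual_uterm pos A w"
  by (induction v) auto

lemma dual_uterm_carrier:
  "cornish_algebra pos A \<Longrightarrow> x \<in> dual_carrier A \<Longrightarrow> dual_uterm pos A w x \<in> dual_carrier A"
  by (induction w) (auto simp: dual_op_carrier)

lemma finite_dual_carrier: "finite (car A) \<Longrightarrow> finite (dual_carrier A)"
  by (rule finite_subset[of _ "car A \<rightarrow>\<^sub>E (UNIV :: bool set)"]) (auto simp: dual_carrier_def finite_PiE)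

lemma closedin_dual_topology_finite:
  assumes "finite S" "S \<subseteq> dual_carrier A"
  shows "closedin (dual_topology A) S"
proof -
  have "t1_space (dual_topology A)"
    unfolding dual_topology_def
    by (intro t1_space_subtopology Hausdorff_imp_t1_space) (simp add: Hausdorff_space_product_topology)
  moreover have "S \<subseteq> topspace (dual_topology A)"
    using assms(2) unfolding dual_topology_def dual_carrier_def by auto
  ultimately show ?thesis using assms(1) t1_space_closedin_finite by blast
qed

text \<open>The orbit of c is a substructure: it is finite, hence closed.\<close>

lemma dual_orbit_eq_carrier:
  assumes ca: "cornish_algebra pos A" and fin: "finite (car A)"
    and minimal: "\<forall>S. dual_substructure pos A S \<and> S \<noteq> {} \<longrightarrow> S = dual_carrier A"
    and c: "c \<in> dual_carrier A"
  shows "range (\<lambda>v. dual_uterm pos A v c) = dual_carrier A"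
proof -
  let ?R = "range (\<lambda>v. dual_uterm pos A v c)"
  have R: "?R \<subseteq> dual_carrier A" using dual_uterm_carrier[OF ca c] by auto
  have "dual_op pos A f (dual_uterm pos A v c) \<in> ?R" for f v
    using rangeI[of "\<lambda>v. dual_uterm pos A v c" "f # v"] by simp
  with R have "dual_substructure pos A ?R"
    unfolding dual_substructure_def
    using closedin_dual_topology_finite[OF finite_subset[OF R finite_dual_carrier[OF fin]] R] by blast
  then show ?thesis using minimal by blast
qed

lemma constant_uterm_orbit_covers:
  assumes ca: "cornish_algebra pos A" "finite (car A)"
    and minimal: "\<forall>S. dual_substructure pos A S \<and> S \<noteq> {} \<longrightarrow> S = dual_carrier A"
    and const: "\<forall>x\<in>dual_carrier A. \<forall>y\<in>dual_carrier A. dual_uterm pos A t x = dual_uterm pos A t y"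
  shows "\<forall>q\<in>dual_carrier A. \<exists>v. \<forall>p\<in>dual_carrier A. dual_uterm pos A v (dual_uterm pos A t p) = q"
proof
  fix q assume q: "q \<in> dual_carrier A"
  have "q \<in> range (\<lambda>v. dual_uterm pos A v (dual_uterm pos A t q))"
    using dual_orbit_eq_carrier[OF ca minimal dual_uterm_carrier[OF ca(1) q]] q by simp
  then obtain v where v: "dual_uterm pos A v (dual_uterm pos A t q) = q"
    by (elim rangeE) (simp only: eq_commute)
  show "\<exists>v. \<forall>p\<in>dual_carrier A. dual_uterm pos A v (dual_uterm pos A t p) = q"
  proof (intro exI ballI)
    fix p assume "p \<in> dual_carrier A"
    then have "dual_uterm pos A t p = dual_uterm pos A t q" using const q by blast
    then show "dual_uterm pos A v (dual_uterm pos A t p) = q" using v by simp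
  qed
qed

section \<open>Unary terms with values in {0, 1}\<close>

definition odd_negatives :: "('f \<Rightarrow> bool) \<Rightarrow> 'f list \<Rightarrow> bool" where
  "odd_negatives pos w \<longleftrightarrow> odd (length (filter (\<lambda>f. \<not> pos f) w))"

lemma fold_ops_closed: "cornish_algebra pos A \<Longrightarrow> a \<in> car A \<Longrightarrow> fold (ops A) w a \<in> car A"
  by (induction w arbitrary: a) (auto simp: cornish_algebra_ops_closed)

text \<open>A word [f1, ..., fn] acts on A as fn o ... o f1, i.e. as fold (ops A), and on D(A) as
  f1 o ... o fn; each negative symbol contributes one complement.\<close>

lemma dual_point_fold_ops:
  assumes ca: "cornish_algebra pos A" and a: "a \<in> car A"
  shows "p (fold (ops A) w a) = (dual_uterm pos A w p a \<noteq> odd_negatives pos w)"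
  using a
proof (induction w arbitrary: a)
  case (Cons f w)
  have "p (fold (ops A) (f # w) a) = (dual_uterm pos A w p (ops A f a) \<noteq> odd_negatives pos w)"
    using Cons cornish_algebra_ops_closed[OF ca] by simp
  also have "dual_uterm pos A w p (ops A f a) = (dual_op pos A f (dual_uterm pos A w p) a = pos f)"
    using dual_op_apply[OF Cons.prems] by auto
  finally show ?case by (auto simp: odd_negatives_def)
qed (simp add: odd_negatives_def)

lemma fold_ops_bounds_if_dual_constant:
  assumes ca: "cornish_algebra pos A" and fin: "finite (car A)" and a: "a \<in> car A"
    and const: "\<forall>x\<in>dual_carrier A. \<forall>y\<in>dual_carrier A. dual_uterm pos A w x = dual_uterm pos A w y"
  shows "fold (ops A) w a = bt A \<or> fold (ops A) w a = tp A"
proof -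
  note bdl = cornish_algebra_bdl[OF ca]
  let ?e = "fold (ops A) w a"
  have e: "?e \<in> car A" using fold_ops_closed[OF ca a] .
  have agree: "p ?e = q ?e" if "p \<in> dual_carrier A" "q \<in> dual_carrier A" for p q
    using dual_point_fold_ops[OF ca a, of p w] dual_point_fold_ops[OF ca a, of q w]
      const[rule_format, OF that] by simp
  show ?thesis
  proof (cases "\<exists>p\<in>dual_carrier A. p ?e")
    case True
    then obtain p where p: "p \<in> dual_carrier A" "p ?e" by blast
    have "?e = tp A"
      by (rule eq_if_dual_points_agree[OF bdl fin e bdl_closed(2)[OF bdl]])
        (simp add: agree[OF _ p(1)] p(2) dual_carrierD(4))
    then show ?thesis ..
  next
    case False
    have "?e = bt A"
      by (rule eq_if_dual_points_agree[OF bdl fin e bdl_closed(1)[OF bdl]])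
        (use False in \<open>auto simp: dual_carrierD(3)\<close>)
    then show ?thesis ..
  qed
qed

text \<open>Appending g to a word with an odd number of negative symbols removes the complement
  in dual_point_fold_ops.\<close>

definition even_word :: "('f \<Rightarrow> bool) \<Rightarrow> 'f \<Rightarrow> 'f list \<Rightarrow> 'f list" where
  "even_word pos g w = (if odd_negatives pos w then w @ [g] else w)"

lemma not_odd_negatives_even_word: "\<not> pos g \<Longrightarrow> \<not> odd_negatives pos (even_word pos g w)"
  unfolding even_word_def odd_negatives_def by simp

lemma dual_uterm_even_word:
  "dual_uterm pos A (even_word pos g w) x =
     dual_uterm pos A w (if odd_negatives pos w then dual_op pos A g x else x)"
  by (simp add: even_word_def dual_uterm_append)

definition boolean_separating_words :: "('a, 'f) cornish \<Rightarrow> 'f list list \<Rightarrow> bool" where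
  "boolean_separating_words A ws \<longleftrightarrow>
     (\<forall>w\<in>set ws. \<forall>a\<in>car A. fold (ops A) w a = bt A \<or> fold (ops A) w a = tp A) \<and>
     (\<forall>a\<in>car A. \<forall>b\<in>car A. a \<noteq> b \<longrightarrow> (\<exists>w\<in>set ws. fold (ops A) w a \<noteq> fold (ops A) w b))"

lemma boolean_separating_words_from_cover:
  assumes ca: "cornish_algebra pos A" and fin: "finite (car A)" and g: "\<not> pos g"
    and const: "\<forall>x\<in>dual_carrier A. \<forall>y\<in>dual_carrier A. dual_uterm pos A t x = dual_uterm pos A t y"
    and cover: "\<forall>q\<in>dual_carrier A. \<exists>v\<in>set vs. \<forall>p\<in>dual_carrier A.
                  dual_uterm pos A v (dual_uterm pos A t p) = q"
  shows "boolean_separating_words A (map (\<lambda>v. even_word pos g (v @ t)) vs)"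
proof -
  have dual_value:
    "dual_uterm pos A (even_word pos g (v @ t)) p = dual_uterm pos A v (dual_uterm pos A t q)"
    if p: "p \<in> dual_carrier A" and q: "q \<in> dual_carrier A" for v p q
  proof -
    have "(if odd_negatives pos (v @ t) then dual_op pos A g p else p) \<in> dual_carrier A"
      using dual_op_carrier[OF ca p] p by simp
    then have "dual_uterm pos A t (if odd_negatives pos (v @ t) then dual_op pos A g p else p) =
        dual_uterm pos A t q"
      using const q by blast
    then show ?thesis by (simp add: dual_uterm_even_word dual_uterm_append)
  qed
  have bounds: "fold (ops A) (even_word pos g (v @ t)) a = bt A \<or>
      fold (ops A) (even_word pos g (v @ t)) a = tp A" if "a \<in> car A" for v a
  proof (rule fold_ops_bounds_if_dual_constant[OF ca fin that], intro ballI)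
    fix x y assume "x \<in> dual_carrier A" "y \<in> dual_carrier A"
    then show "dual_uterm pos A (even_word pos g (v @ t)) x = dual_uterm pos A (even_word pos g (v @ t)) y"
      using dual_value[of x x] dual_value[of y x] by simp
  qed
  have "\<exists>v\<in>set vs. fold (ops A) (even_word pos g (v @ t)) a \<noteq> fold (ops A) (even_word pos g (v @ t)) b"
    if a: "a \<in> car A" and b: "b \<in> car A" and "a \<noteq> b" for a b
  proof -
    obtain q where q: "q \<in> dual_carrier A" "q a \<noteq> q b"
      using dual_points_separate[OF cornish_algebra_bdl[OF ca] fin a b \<open>a \<noteq> b\<close>] by blast
    obtain v where v: "v \<in> set vs" "dual_uterm pos A v (dual_uterm pos A t q) = q"
      using cover q(1) by blast
    have fixes_q: "q (fold (ops A) (even_word pos g (v @ t)) c) = q c" if "c \<in> car A" for c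
      using dual_point_fold_ops[OF ca that, of q] not_odd_negatives_even_word[of pos g, OF g]
        dual_value[OF q(1) q(1)] v(2) by simp
    have "q (fold (ops A) (even_word pos g (v @ t)) a) \<noteq> q (fold (ops A) (even_word pos g (v @ t)) b)"
      using fixes_q[OF a] fixes_q[OF b] q(2) by simp
    then show ?thesis using v(1) by (intro bexI) auto
  qed
  then show ?thesis unfolding boolean_separating_words_def using bounds by auto
qed

lemma finite_choice_list:
  assumes "finite I" "\<forall>i\<in>I. finite (X i)" "\<forall>i\<in>I. \<forall>x\<in>X i. \<exists>v. P i x v"
  shows "\<exists>vs. \<forall>i\<in>I. \<forall>x\<in>X i. \<exists>v\<in>set vs. P i x v"
proof -
  define choice where "choice i x = (SOME v. P i x v)" for i x
  have "finite (\<Union>i\<in>I. choice i ` X i)" using assms(1,2) by simp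
  then obtain vs where vs: "set vs = (\<Union>i\<in>I. choice i ` X i)" using finite_list by metis
  have "P i x (choice i x)" if "i \<in> I" "x \<in> X i" for i x
    unfolding choice_def by (rule someI_ex) (use assms(3) that in blast)
  moreover have "choice i x \<in> set vs" if "i \<in> I" "x \<in> X i" for i x
    unfolding vs using that by auto
  ultimately show ?thesis by fast
qed

section \<open>A discriminator term and semi-primality\<close>

lemma teval_fold_Op: "teval A \<rho> (fold Op w s) = fold (ops A) w (teval A \<rho> s)"
  by (induction w arbitrary: s) auto

lemma env3_simps [simp]: "env3 x y z V0 = x" "env3 x y z V1 = y" "env3 x y z V2 = z"
  unfolding env3_def by auto

context
  fixes A :: "('a, 'f) cornish" and g :: 'f
  assumes bdl: "bdl A"
    and swap_bounds: "ops A g (bt A) = tp A" "ops A g (tp A) = bt A"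
begin

text \<open>On the two-element chain, g is complementation, so this term computes the
  biconditional.\<close>

definition iff_trm :: "('f, 'v) trm \<Rightarrow> ('f, 'v) trm \<Rightarrow> ('f, 'v) trm" where
  "iff_trm s1 s2 = Join (Meet s1 s2) (Meet (Op g s1) (Op g s2))"

definition eq_test_trm :: "'f list list \<Rightarrow> ('f, 'v) trm \<Rightarrow> ('f, 'v) trm \<Rightarrow> ('f, 'v) trm" where
  "eq_test_trm ws s1 s2 = foldr (\<lambda>w e. Meet (iff_trm (fold Op w s1) (fold Op w s2)) e) ws Top"

definition discriminator_trm :: "'f list list \<Rightarrow> ('f, var3) trm" where
  "discriminator_trm ws =
     Join (Meet (Var V0) (Op g (eq_test_trm ws (Var V0) (Var V1))))
          (Meet (Var V2) (eq_test_trm ws (Var V0) (Var V1)))"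

lemma teval_iff_trm:
  assumes "teval A \<rho> s1 \<in> {bt A, tp A}" "teval A \<rho> s2 \<in> {bt A, tp A}"
  shows "teval A \<rho> (iff_trm s1 s2) = (if teval A \<rho> s1 = teval A \<rho> s2 then tp A else bt A)"
  using assms bdl_idem_bounds[OF bdl bdl_closed(1)[OF bdl]] bdl_idem_bounds[OF bdl bdl_closed(2)[OF bdl]]
  by (auto simp: iff_trm_def swap_bounds)

lemma teval_eq_test_trm:
  assumes boolean: "\<forall>w\<in>set ws. \<forall>a\<in>car A. fold (ops A) w a = bt A \<or> fold (ops A) w a = tp A"
    and s: "teval A \<rho> s1 \<in> car A" "teval A \<rho> s2 \<in> car A"
  shows "teval A \<rho> (eq_test_trm ws s1 s2) =
    (if \<forall>w\<in>set ws. fold (ops A) w (teval A \<rho> s1) = fold (ops A) w (teval A \<rho> s2) then tp A else bt A)"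
  using boolean
proof (induction ws)
  case (Cons w ws)
  then have "teval A \<rho> (iff_trm (fold Op w s1) (fold Op w s2)) =
      (if fold (ops A) w (teval A \<rho> s1) = fold (ops A) w (teval A \<rho> s2) then tp A else bt A)"
    using s by (subst teval_iff_trm) (auto simp: teval_fold_Op)
  with Cons show ?case
    by (simp add: eq_test_trm_def bdl_idem_bounds[OF bdl] bdl_closed[OF bdl])
qed (simp add: eq_test_trm_def)

lemma discriminator_trm_is_discriminator:
  assumes "boolean_separating_words A ws"
  shows "is_discriminator_term A (discriminator_trm ws)"
  unfolding is_discriminator_term_def
proof (intro ballI)
  fix x y z assume x: "x \<in> car A" and y: "y \<in> car A" and z: "z \<in> car A"
  have "(\<forall>w\<in>set ws. fold (ops A) w x = fold (ops A) w y) \<longleftrightarrow> x = y"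
    using assms x y unfolding boolean_separating_words_def by blast
  then have "teval A (env3 x y z) (eq_test_trm ws (Var V0) (Var V1)) = (if x = y then tp A else bt A)"
    using teval_eq_test_trm[of ws "env3 x y z" "Var V0" "Var V1"] assms x y
    unfolding boolean_separating_words_def by simp
  then show "teval A (env3 x y z) (discriminator_trm ws) = (if x \<noteq> y then x else z)"
    using x y z by (simp add: discriminator_trm_def swap_bounds bdl_idem_bounds[OF bdl] bdl_laws(8)[OF bdl])
qed

end


definition median_trm :: "('f, var3) trm" where
  "median_trm = Join (Join (Meet (Var V0) (Var V1)) (Meet (Var V1) (Var V2))) (Meet (Var V0) (Var V2))"

lemma median_trm_is_majority: "bdl A \<Longrightarrow> is_majority_term A median_trm"
  unfolding is_majority_term_def median_trm_def
  by (simp add: bdl_laws bdl_idem_bounds bdl_closed)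

lemma subalg2D:
  assumes "subalg2 A S"
  shows "S \<subseteq> car A \<times> car A" "(bt A, bt A) \<in> S" "(tp A, tp A) \<in> S"
    and "(a, a') \<in> S \<Longrightarrow> (b, b') \<in> S \<Longrightarrow> (jn A a b, jn A a' b') \<in> S"
    and "(a, a') \<in> S \<Longrightarrow> (b, b') \<in> S \<Longrightarrow> (mt A a b, mt A a' b') \<in> S"
    and "(a, a') \<in> S \<Longrightarrow> (ops A f a, ops A f a') \<in> S"
  using assms unfolding subalg2_def by blast+

lemma subalg2_teval:
  assumes S: "subalg2 A S" and \<rho>: "\<And>v. (\<rho>1 v, \<rho>2 v) \<in> S"
  shows "(teval A \<rho>1 s, teval A \<rho>2 s) \<in> S"
  by (induction s) (simp_all add: \<rho> subalg2D[OF S])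

lemma subalg2_fold_ops: "subalg2 A S \<Longrightarrow> (a, a') \<in> S \<Longrightarrow> (fold (ops A) w a, fold (ops A) w a') \<in> S"
  by (induction w arbitrary: a a') (simp_all add: subalg2D)

lemma subalg2_swap:
  assumes "subalg2 A S"
  shows "subalg2 A (prod.swap ` S)"
proof -
  have swap_mem: "(x, y) \<in> prod.swap ` S \<longleftrightarrow> (y, x) \<in> S" for x y by force
  show ?thesis
    unfolding subalg2_def using subalg2D[OF assms] by (auto simp: swap_mem)
qed

lemma subalg_fst_image:
  assumes S: "subalg2 A S"
  shows "subalg A (fst ` S)"
  unfolding subalg_def
proof (intro conjI ballI allI)
  show "fst ` S \<subseteq> car A" using subalg2D(1)[OF S] by auto
  show "bt A \<in> fst ` S" "tp A \<in> fst ` S" using subalg2D(2,3)[OF S] by force+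
next
  fix a b assume "a \<in> fst ` S" "b \<in> fst ` S"
  then obtain a' b' where "(a, a') \<in> S" "(b, b') \<in> S" by force
  then show "jn A a b \<in> fst ` S" "mt A a b \<in> fst ` S" using subalg2D(4,5)[OF S] by force+
next
  fix f a assume "a \<in> fst ` S"
  then obtain a' where "(a, a') \<in> S" by force
  then show "ops A f a \<in> fst ` S" using subalg2D(6)[OF S] by force
qed

lemma subalg_snd_image: "subalg2 A S \<Longrightarrow> subalg A (snd ` S)"
  using subalg_fst_image[OF subalg2_swap] by (simp add: image_image)

lemma subalg2_product_or_diagonal:
  assumes d: "is_discriminator_term A d" and ws: "boolean_separating_words A ws" and S: "subalg2 A S"
  shows "(\<exists>B1 B2. subalg A B1 \<and> subalg A B2 \<and> S = B1 \<times> B2) \<or> (\<exists>B. subalg A B \<and> S = {(b, b) | b. b \<in> B})"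
proof (cases "\<forall>(u, w)\<in>S. u = w")
  case True
  then have "S = {(b, b) | b. b \<in> fst ` S}" by force
  then show ?thesis using subalg_fst_image[OF S] by blast
next
  case False
  have S_car: "S \<subseteq> car A \<times> car A" and bounds: "(bt A, bt A) \<in> S" "(tp A, tp A) \<in> S"
    using S unfolding subalg2_def by auto
  have disc: "(if a \<noteq> b then a else c, if a' \<noteq> b' then a' else c') \<in> S"
    if "(a, a') \<in> S" "(b, b') \<in> S" "(c, c') \<in> S" for a a' b b' c c'
  proof -
    have "(teval A (env3 a b c) d, teval A (env3 a' b' c') d) \<in> S"
      by (rule subalg2_teval[OF S]) (use that in \<open>simp add: env3_def split: var3.split\<close>)
    moreover have "a \<in> car A" "b \<in> car A" "c \<in> car A" "a' \<in> car A" "b' \<in> car A" "c' \<in> car A"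
      using that S_car by auto
    ultimately show ?thesis using d unfolding is_discriminator_term_def by simp
  qed
  obtain u w where uw: "(u, w) \<in> S" "u \<noteq> w" using False by auto
  then obtain v where "v \<in> set ws" "fold (ops A) v u \<noteq> fold (ops A) v w"
    using ws S_car unfolding boolean_separating_words_def by blast
  moreover have "(fold (ops A) v u, fold (ops A) v w) \<in> S" using subalg2_fold_ops[OF S uw(1)] .
  ultimately have "(bt A, tp A) \<in> S \<or> (tp A, bt A) \<in> S" and "bt A \<noteq> tp A"
    using ws S_car uw(1) unfolding boolean_separating_words_def by (metis mem_Sigma_iff subsetD)+
  then obtain x y where xy: "(x, bt A) \<in> S" "(x, tp A) \<in> S" "(bt A, y) \<in> S" "(tp A, y) \<in> S"
    using bounds by blast
  have "fst ` S \<times> snd ` S \<subseteq> S"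
  proof clarify
    fix a a' b b' assume "(a, a') \<in> S" "(b, b') \<in> S"
    then have "(a, bt A) \<in> S" "(bt A, b') \<in> S"
      using disc[OF xy(1,2)] disc[OF xy(3,4)] \<open>bt A \<noteq> tp A\<close> by auto
    then show "(fst (a, a'), snd (b, b')) \<in> S"
      using disc[of "bt A" b' "bt A" "bt A" a "bt A"] bounds(1) by (auto split: if_splits)
  qed
  then have "S = fst ` S \<times> snd ` S" by force
  then show ?thesis using subalg_fst_image[OF S] subalg_snd_image[OF S] by blast
qed

lemma semi_primal_if_boolean_separating_words:
  assumes "bdl A" "finite (car A)" "ops A g (bt A) = tp A" "ops A g (tp A) = bt A"
    and "boolean_separating_words A ws"
  shows "semi_primal A"
  unfolding semi_primal_def
  using assms(2) median_trm_is_majority[OF assms(1)]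
    subalg2_product_or_diagonal[OF discriminator_trm_is_discriminator[OF assms(1,3-5)] assms(5)]
  by blast

theorem corollary5p12:
  fixes \<B> :: "('a, 'f) cornish set" and pos :: "'f \<Rightarrow> bool"
  assumes "finite \<B>"
    and "\<forall>A\<in>\<B>. cornish_algebra pos A \<and> finite (car A)"
    and "\<forall>A\<in>\<B>. \<forall>S. dual_substructure pos A S \<and> S \<noteq> {} \<longrightarrow> S = dual_carrier A"
    and "\<exists>f. \<not> pos f"
    and "\<exists>t. t \<noteq> [] \<and> (\<forall>A\<in>\<B>. \<forall>x\<in>dual_carrier A. \<forall>y\<in>dual_carrier A.
                dual_uterm pos A t x = dual_uterm pos A t y)"
  shows "(\<forall>A\<in>\<B>. semi_primal A) \<and> (\<exists>d. \<forall>A\<in>\<B>. is_discriminator_term A d)"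
proof -
  obtain g where g: "\<not> pos g" using assms(4) by blast
  obtain t where const: "\<forall>A\<in>\<B>. \<forall>x\<in>dual_carrier A. \<forall>y\<in>dual_carrier A.
      dual_uterm pos A t x = dual_uterm pos A t y" using assms(5) by blast
  have ca: "cornish_algebra pos A" "finite (car A)" if "A \<in> \<B>" for A
    using assms(2) that by auto
  have orbits: "\<forall>A\<in>\<B>. \<forall>q\<in>dual_carrier A. \<exists>v. \<forall>p\<in>dual_carrier A.
      dual_uterm pos A v (dual_uterm pos A t p) = q"
    using constant_uterm_orbit_covers[OF ca bspec[OF assms(3)] bspec[OF const]] by simp
  have "\<forall>A\<in>\<B>. finite (dual_carrier A)" using finite_dual_carrier ca(2) by blast
  from finite_choice_list[OF assms(1) this orbits] obtain vs where cover:
    "\<forall>A\<in>\<B>. \<forall>q\<in>dual_carrier A. \<exists>v\<in>set vs.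
      \<forall>p\<in>dual_carrier A. dual_uterm pos A v (dual_uterm pos A t p) = q" ..
  define ws where "ws = map (\<lambda>v. even_word pos g (v @ t)) vs"
  have "semi_primal A \<and> is_discriminator_term A (discriminator_trm g ws)" if A: "A \<in> \<B>" for A
  proof -
    note bdl = cornish_algebra_bdl[OF ca(1)[OF A]]
    note swap = cornish_algebra_negative_swaps_bounds[OF ca(1)[OF A] g]
    have "boolean_separating_words A ws"
      unfolding ws_def
      using boolean_separating_words_from_cover[OF ca[OF A] g bspec[OF const A] bspec[OF cover A]] .
    then show ?thesis
      using semi_primal_if_boolean_separating_words[OF bdl ca(2)[OF A] swap]
        discriminator_trm_is_discriminator[OF bdl swap] by blast
  qed
  then show ?thesis by blast
qed

end
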